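(* Let $A$ be a Banach algebra and let $J$ be a right ideal in $A$ which is dense in $A$ for the norm topology. Then $J$ is quasi-directly finite if and only if $A$ is quasi-directly finite.
   Context: For $a,b$ in a ring $R$ (not necessarily unital), $a\diamond b := a+b-ab$; if $a\diamond b=0$ then $a$ is a left quasi-inverse of $b$ and $b$ a right quasi-inverse of $a$. A ring $R$ is quasi-directly finite if every element having a left quasi-inverse in $R$ also has a right quasi-inverse in $R$ (equivalently, $a\diamond b=0$ implies $b\diamond a=0$ for all $a,b\in R$). Here $J$ is regarded as a ring with the operations inherited from $A$. *)

theory Defs
  imports "HOL-Analysis.Analysis"
begin

definition qop :: "'a::ring \<Rightarrow> 'a \<Rightarrow> 'a" where
  "qop a b = a + b - a * b"

definition quasi_directly_finite_on :: "'a::ring set \<Rightarrow> bool" where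
  "quasi_directly_finite_on S \<longleftrightarrow>
     (\<forall>a\<in>S. (\<exists>b\<in>S. qop b a = 0) \<longrightarrow> (\<exists>c\<in>S. qop a c = 0))"

definition right_ideal :: "'a::ring set \<Rightarrow> bool" where
  "right_ideal J \<longleftrightarrow> 0 \<in> J \<and> (\<forall>x\<in>J. \<forall>y\<in>J. x + y \<in> J) \<and> (\<forall>x\<in>J. - x \<in> J)
     \<and> (\<forall>x\<in>J. \<forall>a. x * a \<in> J)"

end

theory Submission
  imports Defs
begin

text \<open>
  Right quasi-inverses of elements of a right ideal stay in the ideal, which gives one direction.
  Conversely, let \<open>b \<diamond> a = 0\<close> in \<open>A\<close> and approximate \<open>b\<close> by \<open>y \<in> J\<close>.
  Then \<open>y \<diamond> a\<close> is small, hence quasi-invertible by a Neumann series, and composing gives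
  \<open>x \<in> J\<close> with \<open>y \<diamond> x = 0\<close>.
  Quasi-direct finiteness of \<open>J\<close> yields \<open>x \<diamond> y = 0\<close>, so \<open>b = y \<diamond> z\<close> for a small \<open>z\<close>.
  As \<open>z\<close> is quasi-invertible too, \<open>b\<close> acquires a left quasi-inverse, which must equal its
  right quasi-inverse \<open>a\<close>.
\<close>

lemma qop_assoc: "qop (qop a b) c = qop a (qop b c)"
  by (simp add: qop_def algebra_simps)

lemma qop_0_right [simp]: "qop a 0 = a"
  and qop_0_left [simp]: "qop 0 a = a"
  by (simp_all add: qop_def)

lemma left_quasi_inverse_eq_right:
  assumes "qop l a = 0" and "qop a r = 0"
  shows "l = r"
proof -
  have "l = qop l (qop a r)" using assms(2) by simp
  also have "\<dots> = r" by (simp add: qop_assoc[symmetric] assms(1))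
  finally show ?thesis .
qed

lemma norm_qop_le:
  fixes a b :: "'a::real_normed_algebra"
  shows "norm (qop a b) \<le> norm a + norm b + norm a * norm b"
proof -
  have "norm (qop a b) \<le> norm (a + b) + norm (a * b)"
    unfolding qop_def by (rule norm_triangle_ineq4)
  also have "\<dots> \<le> norm a + norm b + norm a * norm b"
    using norm_triangle_ineq[of a b] norm_mult_ineq[of a b] by linarith
  finally show ?thesis .
qed

lemma right_ideal_right_quasi_inverse_mem:
  assumes J: "right_ideal J" and "y \<in> J" and "qop y x = 0"
  shows "x \<in> J"
proof -
  have "x = y * x + - y" using \<open>qop y x = 0\<close> by (simp add: qop_def algebra_simps)
  with J \<open>y \<in> J\<close> show ?thesis by (metis right_ideal_def)
qed

lemma quasi_directly_finite_on_right_ideal_swap: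
  assumes "right_ideal J" and "quasi_directly_finite_on J"
    and "y \<in> J" and "qop y x = 0"
  shows "qop x y = 0"
proof -
  have "x \<in> J" using right_ideal_right_quasi_inverse_mem assms(1,3,4) .
  then obtain c where "qop x c = 0"
    using assms unfolding quasi_directly_finite_on_def by blast
  moreover have "y = c" using left_quasi_inverse_eq_right assms(4) \<open>qop x c = 0\<close> .
  ultimately show ?thesis by simp
qed

lemma quasi_directly_finite_on_right_ideal:
  assumes "right_ideal J" and "quasi_directly_finite_on (UNIV :: 'a::ring set)"
  shows "quasi_directly_finite_on (J :: 'a set)"
  using assms right_ideal_right_quasi_inverse_mem
  unfolding quasi_directly_finite_on_def by blast


text \<open>\<open>succ_power w n\<close> is \<open>w ^ (n + 1)\<close>; the algebra need not have a unit.\<close>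
fun succ_power :: "'a::real_normed_algebra \<Rightarrow> nat \<Rightarrow> 'a" where
  "succ_power w 0 = w"
| "succ_power w (Suc n) = w * succ_power w n"

lemma succ_power_commute: "succ_power w n * w = w * succ_power w n"
  by (induction n) (simp_all add: mult.assoc)

lemma norm_succ_power_le: "norm (succ_power w n) \<le> norm w ^ Suc n"
proof (induction n)
  case (Suc n)
  have "norm (succ_power w (Suc n)) \<le> norm w * norm (succ_power w n)"
    by (simp add: norm_mult_ineq)
  also have "\<dots> \<le> norm w * norm w ^ Suc n" using Suc by (simp add: mult_left_mono)
  finally show ?case by simp
qed simp

text \<open>The quasi-inverse is \<open>-(w + w\<^sup>2 + w\<^sup>3 + \<dots>)\<close>.\<close>
lemma quasi_invertible_if_norm_less_1:
  fixes w :: "'a::{real_normed_algebra, banach}"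
  assumes "norm w < 1"
  shows "\<exists>w'. qop w w' = 0 \<and> qop w' w = 0 \<and> norm w' \<le> norm w / (1 - norm w)"
proof -
  have geom: "(\<lambda>n. norm w ^ Suc n) sums (norm w / (1 - norm w))"
    using sums_mult[OF geometric_sums[of "norm w"], of "norm w"] assms by simp
  have norm_summable: "summable (\<lambda>n. norm (succ_power w n))"
    using summable_norm_comparison_test[OF _ sums_summable[OF geom]] norm_succ_power_le by blast
  define s where "s = suminf (succ_power w)"
  have s: "succ_power w sums s"
    unfolding s_def using summable_norm_cancel[OF norm_summable] by (simp add: summable_sums)
  have shift: "(\<lambda>n. succ_power w (Suc n)) sums (s - w)"
    using s sums_Suc_iff by (metis diff_add_cancel succ_power.simps(1))
  have "(\<lambda>n. succ_power w (Suc n)) sums (w * s)"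
    using sums_mult[OF s, of w] by simp
  with shift have ws: "w * s = s - w" using sums_unique2 by metis
  have "(\<lambda>n. succ_power w (Suc n)) sums (s * w)"
    using sums_mult2[OF s, of w] by (simp add: succ_power_commute)
  with shift have sw: "s * w = s - w" using sums_unique2 by metis
  have "norm s \<le> (\<Sum>n. norm (succ_power w n))"
    unfolding s_def using norm_summable by (rule summable_norm)
  also have "\<dots> \<le> norm w / (1 - norm w)"
    using sums_le[OF norm_succ_power_le summable_sums[OF norm_summable] geom] .
  finally show ?thesis
    by (intro exI[of _ "- s"]) (simp add: qop_def ws sw)
qed

lemma quasi_invertible_if_norm_le_half:
  fixes w :: "'a::{real_normed_algebra, banach}"
  assumes "norm w \<le> 1/2"
  shows "\<exists>w'. qop w w' = 0 \<and> qop w' w = 0 \<and> norm w' \<le> 1"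
proof -
  obtain w' where "qop w w' = 0" "qop w' w = 0" and bound: "norm w' \<le> norm w / (1 - norm w)"
    using quasi_invertible_if_norm_less_1[of w] assms by auto
  moreover have "norm w / (1 - norm w) \<le> 1"
    using assms by (simp add: divide_le_eq)
  ultimately show ?thesis by fastforce
qed


text \<open>The point is that the bound on \<open>z\<close> is uniform in the choice of \<open>y\<close>, because
  \<open>x\<close> stays bounded by \<open>2 \<parallel>a\<parallel> + 1\<close> while \<open>b - y\<close> can be made arbitrarily small.\<close>
lemma dense_right_ideal_factorization:
  fixes J :: "'a::{real_normed_algebra, banach} set"
  assumes J: "right_ideal J" and dense: "closure J = UNIV" and ba: "qop b a = 0"
  shows "\<exists>y\<in>J. \<exists>x z. qop y x = 0 \<and> b = qop y z \<and> norm z \<le> 1/2"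
proof -
  define \<epsilon> where "\<epsilon> = 1 / (4 * (1 + norm a))"
  have "\<epsilon> > 0" unfolding \<epsilon>_def by (simp add: add_pos_nonneg)
  then obtain y where "y \<in> J" and "dist y b < \<epsilon>"
    using dense closure_approachable[of b J] by auto
  define d where "d = b - y"
  have nd: "norm d \<le> \<epsilon>"
    using \<open>dist y b < \<epsilon>\<close> by (simp add: d_def dist_norm norm_minus_commute)
  have "qop y a = - (d - d * a)"
    using ba unfolding d_def qop_def by (simp add: algebra_simps)
  then have "norm (qop y a) = norm (d - d * a)" by (simp add: norm_minus_commute)
  also have "\<dots> \<le> norm d * (1 + norm a)"
    using norm_triangle_ineq4[of d "d * a"] norm_mult_ineq[of d a] by (simp add: algebra_simps)
  also have "\<dots> \<le> \<epsilon> * (1 + norm a)" using nd by (simp add: mult_right_mono)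
  also have "\<dots> \<le> 1/2" unfolding \<epsilon>_def by (simp add: add_pos_nonneg)
  finally obtain w' where w': "qop (qop y a) w' = 0" and "norm w' \<le> 1"
    using quasi_invertible_if_norm_le_half by blast
  define x where "x = qop a w'"
  have yx: "qop y x = 0" using w' by (simp add: x_def qop_assoc)
  have nx: "norm x \<le> 2 * norm a + 1"
    using norm_qop_le[of a w'] \<open>norm w' \<le> 1\<close> mult_left_mono[OF \<open>norm w' \<le> 1\<close>, of "norm a"]
    by (simp add: x_def)
  define z where "z = d - x * d"
  have "b = qop y z"
  proof -
    have "y * x = y + x" using yx by (simp add: qop_def algebra_simps)
    then have "y * (x * d) = x * d + y * d" by (simp add: mult.assoc[symmetric] distrib_right)
    then show ?thesis by (simp add: z_def d_def qop_def algebra_simps)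
  qed
  moreover have "norm z \<le> 1/2"
  proof -
    have "norm z \<le> norm d * (1 + norm x)"
      using norm_triangle_ineq4[of d "x * d"] norm_mult_ineq[of x d] by (simp add: z_def algebra_simps)
    also have "\<dots> \<le> \<epsilon> * (2 * (1 + norm a))"
      using nd nx \<open>\<epsilon> > 0\<close> by (intro mult_mono) auto
    also have "\<dots> = 1/2"
    proof -
      have "1 + norm a \<noteq> 0" using norm_ge_zero[of a] by linarith
      then show ?thesis unfolding \<epsilon>_def by simp
    qed
    finally show ?thesis .
  qed
  ultimately show ?thesis using \<open>y \<in> J\<close> yx by blast
qed

lemma quasi_directly_finite_on_UNIV_if_dense_right_ideal:
  fixes J :: "'a::{real_normed_algebra, banach} set"
  assumes J: "right_ideal J" and dense: "closure J = UNIV" and qdf: "quasi_directly_finite_on J"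
  shows "quasi_directly_finite_on (UNIV :: 'a set)"
  unfolding quasi_directly_finite_on_def
proof (intro ballI impI)
  fix a :: 'a
  assume "\<exists>b\<in>UNIV. qop b a = 0"
  then obtain b where ba: "qop b a = 0" by blast
  obtain y x z where "y \<in> J" "qop y x = 0" and b: "b = qop y z" and "norm z \<le> 1/2"
    using dense_right_ideal_factorization[OF J dense ba] by blast
  have xy: "qop x y = 0" using quasi_directly_finite_on_right_ideal_swap J qdf \<open>y \<in> J\<close> \<open>qop y x = 0\<close> .
  obtain z' where "qop z' z = 0" using quasi_invertible_if_norm_le_half \<open>norm z \<le> 1/2\<close> by blast
  then have "qop (qop z' x) b = 0"
    by (simp add: b qop_assoc qop_assoc[symmetric, of x y z] xy)
  then have "qop z' x = a" using left_quasi_inverse_eq_right[OF _ ba] by blast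
  then have "qop a b = 0" using \<open>qop (qop z' x) b = 0\<close> by simp
  then show "\<exists>c\<in>UNIV. qop a c = 0" by blast
qed

theorem proposition2p8:
  fixes J :: "'a::{real_normed_algebra, banach} set"
  assumes "right_ideal J"
    and "closure J = UNIV"
  shows "quasi_directly_finite_on J \<longleftrightarrow> quasi_directly_finite_on (UNIV :: 'a set)"
  using quasi_directly_finite_on_right_ideal quasi_directly_finite_on_UNIV_if_dense_right_ideal assms
  by blast

end
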